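(* Let $p$ be a nonnegative integer. Every subcubic tree with $p$ leaves contains $\lfloor p/2\rfloor$ pairwise vertex-disjoint leaf-to-leaf paths.
   Context: A graph is subcubic if every vertex has degree at most $3$. A leaf-to-leaf path in a tree is a path whose two endvertices are distinct leaves of the tree. *)

theory Defs
  imports Main
begin

definition graph :: "'a set \<Rightarrow> ('a \<Rightarrow> 'a \<Rightarrow> bool) \<Rightarrow> bool" where
  "graph V E \<equiv> finite V \<and> (\<forall>u v. E u v \<longrightarrow> u \<in> V \<and> v \<in> V)
     \<and> (\<forall>u v. E u v \<longrightarrow> E v u) \<and> (\<forall>v. \<not> E v v)"

definition is_path :: "'a set \<Rightarrow> ('a \<Rightarrow> 'a \<Rightarrow> bool) \<Rightarrow> 'a list \<Rightarrow> bool" where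
  "is_path V E ps \<equiv> ps \<noteq> [] \<and> distinct ps \<and> set ps \<subseteq> V
     \<and> (\<forall>i. i + 1 < length ps \<longrightarrow> E (ps ! i) (ps ! (i + 1)))"

definition connected_graph :: "'a set \<Rightarrow> ('a \<Rightarrow> 'a \<Rightarrow> bool) \<Rightarrow> bool" where
  "connected_graph V E \<equiv> \<forall>u\<in>V. \<forall>v\<in>V. \<exists>ps. is_path V E ps \<and> hd ps = u \<and> last ps = v"

definition is_cycle :: "'a set \<Rightarrow> ('a \<Rightarrow> 'a \<Rightarrow> bool) \<Rightarrow> 'a list \<Rightarrow> bool" where
  "is_cycle V E cs \<equiv> length cs \<ge> 3 \<and> is_path V E cs \<and> E (last cs) (hd cs)"

definition tree :: "'a set \<Rightarrow> ('a \<Rightarrow> 'a \<Rightarrow> bool) \<Rightarrow> bool" where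
  "tree V E \<equiv> graph V E \<and> V \<noteq> {} \<and> connected_graph V E \<and> \<not> (\<exists>cs. is_cycle V E cs)"

definition degree :: "'a set \<Rightarrow> ('a \<Rightarrow> 'a \<Rightarrow> bool) \<Rightarrow> 'a \<Rightarrow> nat" where
  "degree V E v \<equiv> card {u \<in> V. E v u}"

definition subcubic :: "'a set \<Rightarrow> ('a \<Rightarrow> 'a \<Rightarrow> bool) \<Rightarrow> bool" where
  "subcubic V E \<equiv> \<forall>v\<in>V. degree V E v \<le> 3"

definition leaves :: "'a set \<Rightarrow> ('a \<Rightarrow> 'a \<Rightarrow> bool) \<Rightarrow> 'a set" where
  "leaves V E \<equiv> {v \<in> V. degree V E v = 1}"

definition leaf_to_leaf_path :: "'a set \<Rightarrow> ('a \<Rightarrow> 'a \<Rightarrow> bool) \<Rightarrow> 'a list \<Rightarrow> bool" where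
  "leaf_to_leaf_path V E ps \<equiv> is_path V E ps \<and> hd ps \<in> leaves V E \<and> last ps \<in> leaves V E
     \<and> hd ps \<noteq> last ps"

end

theory Submission
  imports Defs
begin

text \<open>Strengthen the claim to a set S of terminals of degree at most 2 in a subcubic tree:
  there are \<lfloor>|S|/2\<rfloor> disjoint paths joining pairs of terminals. Remove a leaf l with
  neighbour u. If l is not a terminal, recurse. If only l is a terminal, move the terminal
  to u (now of degree at most 2) and prolong the path ending at u by l. If both are
  terminals, u had degree at most 2, so deleting u as well keeps the tree connected; take
  the path l u and recurse on the remaining terminals.\<close>

lemma is_path_iff_successively:
  "is_path V E ps \<longleftrightarrow> ps \<noteq> [] \<and> distinct ps \<and> set ps \<subseteq> V \<and> successively E ps"
  unfolding is_path_def successively_conv_nth by auto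

lemma is_path_mono: "is_path V E ps \<Longrightarrow> V \<subseteq> W \<Longrightarrow> is_path W E ps"
  unfolding is_path_def by auto

lemma is_path_Cons:
  "is_path V E ps \<Longrightarrow> l \<notin> set ps \<Longrightarrow> l \<in> V \<Longrightarrow> E l (hd ps) \<Longrightarrow> is_path V E (l # ps)"
  unfolding is_path_iff_successively by (cases ps) auto

lemma is_path_snoc:
  "is_path V E ps \<Longrightarrow> l \<notin> set ps \<Longrightarrow> l \<in> V \<Longrightarrow> E (last ps) l \<Longrightarrow> is_path V E (ps @ [l])"
  unfolding is_path_iff_successively by (auto simp: successively_append_iff)

lemma is_path_take: "is_path V E ps \<Longrightarrow> 0 < n \<Longrightarrow> is_path V E (take n ps)"
  unfolding is_path_iff_successively
  by (metis append_take_drop_id distinct_take successively_append_iff take_eq_Nil2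
      not_gr_zero set_take_subset subset_trans)

lemma length_path_le_card: "is_path V E ps \<Longrightarrow> finite V \<Longrightarrow> length ps \<le> card V"
  unfolding is_path_def by (metis card_mono distinct_card)

lemma acyclic_subset:
  "\<not> (\<exists>cs. is_cycle V E cs) \<Longrightarrow> W \<subseteq> V \<Longrightarrow> \<not> (\<exists>cs. is_cycle W E cs)"
  unfolding is_cycle_def using is_path_mono by blast

lemma degree_mono: "finite V \<Longrightarrow> W \<subseteq> V \<Longrightarrow> degree W E u \<le> degree V E u"
  unfolding degree_def by (rule card_mono) auto

lemma degree_Diff_neighbour:
  assumes "finite V" "l \<in> V" "E u l"
  shows "degree (V - {l}) E u = degree V E u - 1"
proof -
  have "{w \<in> V - {l}. E u w} = {w \<in> V. E u w} - {l}" by auto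
  then show ?thesis unfolding degree_def using assms by (simp add: card_Diff_singleton)
qed

lemma subcubic_subset: "finite V \<Longrightarrow> subcubic V E \<Longrightarrow> W \<subseteq> V \<Longrightarrow> subcubic W E"
  unfolding subcubic_def by (meson degree_mono le_trans subsetD)

lemma is_path_interior_degree:
  assumes sym: "\<And>a b. E a b \<Longrightarrow> E b a" and fin: "finite V"
    and ps: "is_path V E ps" and i: "0 < i" "Suc i < length ps"
  shows "2 \<le> degree V E (ps ! i)"
proof -
  let ?N = "{w \<in> V. E (ps ! i) w}"
  have edge: "E (ps ! k) (ps ! Suc k)" if "Suc k < length ps" for k
    using ps that unfolding is_path_def by simp
  have vertex: "ps ! k \<in> V" if "k < length ps" for k
    using ps that unfolding is_path_def by (metis nth_mem subsetD)
  have "ps ! Suc i \<in> ?N" using edge[OF i(2)] vertex[OF i(2)] by simp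
  moreover have "ps ! (i - 1) \<in> ?N"
    using edge[of "i - 1"] vertex[of "i - 1"] sym i by simp
  moreover have "ps ! (i - 1) \<noteq> ps ! Suc i"
    using ps i unfolding is_path_def by (simp add: nth_eq_iff_index_eq)
  ultimately have "card {ps ! (i - 1), ps ! Suc i} \<le> card ?N"
    using fin by (intro card_mono) auto
  then show ?thesis unfolding degree_def using \<open>ps ! (i - 1) \<noteq> ps ! Suc i\<close> by simp
qed

lemma connected_graph_Diff_vertex:
  assumes sym: "\<And>a b. E a b \<Longrightarrow> E b a" and fin: "finite V"
    and conn: "connected_graph V E" and deg: "degree V E l \<le> 1"
  shows "connected_graph (V - {l}) E"
  unfolding connected_graph_def
proof (intro ballI)
  fix a b assume a: "a \<in> V - {l}" and b: "b \<in> V - {l}"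
  then obtain ps where ps: "is_path V E ps" "hd ps = a" "last ps = b"
    using conn unfolding connected_graph_def by blast
  have "l \<notin> set ps"
  proof
    assume "l \<in> set ps"
    then obtain i where i: "i < length ps" "ps ! i = l" by (metis in_set_conv_nth)
    have "ps \<noteq> []" using ps unfolding is_path_def by simp
    then have "hd ps = ps ! 0" "last ps = ps ! (length ps - 1)"
      by (simp_all add: hd_conv_nth last_conv_nth)
    then have "ps ! 0 \<noteq> l" "ps ! (length ps - 1) \<noteq> l" using ps(2,3) a b by auto
    then have "i \<noteq> 0" "i \<noteq> length ps - 1" using i(2) by metis+
    then have "2 \<le> degree V E l"
      using is_path_interior_degree[OF sym fin ps(1), of i] i by simp
    then show False using deg by simp
  qed
  then have "is_path (V - {l}) E ps" using ps(1) unfolding is_path_def by auto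
  then show "\<exists>ps. is_path (V - {l}) E ps \<and> hd ps = a \<and> last ps = b" using ps by blast
qed

lemma ex_longest_path:
  assumes "finite V" "is_path V E qs"
  shows "\<exists>ps. is_path V E ps \<and> length qs \<le> length ps
    \<and> (\<forall>rs. is_path V E rs \<longrightarrow> length rs \<le> length ps)"
  using ex_has_greatest_nat[of "is_path V E" qs length "Suc (card V)"] assms length_path_le_card
  by (metis less_Suc_eq_le)

text \<open>Each neighbour of l off the path would prolong it, and one further along it would
  close a cycle.\<close>
lemma longest_path_hd_neighbours:
  assumes sym: "\<And>a b. E a b \<Longrightarrow> E b a" and irr: "\<And>a. \<not> E a a"
    and acyc: "\<not> (\<exists>cs. is_cycle V E cs)"
    and ps: "is_path V E (l # x # rest)"
    and longest: "\<forall>rs. is_path V E rs \<longrightarrow> length rs \<le> length (l # x # rest)"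
  shows "{w \<in> V. E l w} = {x}"
proof (intro equalityI subsetI)
  fix w assume w: "w \<in> {w \<in> V. E l w}"
  let ?ps = "l # x # rest"
  show "w \<in> {x}"
  proof (cases "w \<in> set ?ps")
    case False
    then have "is_path V E (w # ?ps)" using is_path_Cons[OF ps False] w sym by simp
    then show ?thesis using longest by fastforce
  next
    case True
    then obtain j where j: "j < length ?ps" "?ps ! j = w" by (metis in_set_conv_nth)
    have "j = 1"
    proof (rule ccontr)
      assume "j \<noteq> 1"
      moreover have "j \<noteq> 0" using j w irr by (cases j) auto
      ultimately have "3 \<le> length (take (Suc j) ?ps)" using j by simp
      moreover have "last (take (Suc j) ?ps) = w" using j by (metis take_Suc_conv_app_nth last_snoc)
      ultimately have "is_cycle V E (take (Suc j) ?ps)"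
        unfolding is_cycle_def using is_path_take[OF ps, of "Suc j"] w sym by simp
      then show False using acyc by blast
    qed
    then show ?thesis using j by simp
  qed
qed (use ps in \<open>auto simp: is_path_iff_successively\<close>)

lemma ex_leaf:
  assumes sym: "\<And>a b. E a b \<Longrightarrow> E b a" and irr: "\<And>a. \<not> E a a"
    and fin: "finite V" and conn: "connected_graph V E"
    and acyc: "\<not> (\<exists>cs. is_cycle V E cs)" and two: "2 \<le> card V"
  shows "\<exists>l u. l \<in> V \<and> {w \<in> V. E l w} = {u}"
proof -
  obtain a b where ab: "a \<in> V" "b \<in> V" "a \<noteq> b"
    using two fin card_le_Suc0_iff_eq[of V] by fastforce
  then obtain qs where qs: "is_path V E qs" "hd qs = a" "last qs = b"
    using conn unfolding connected_graph_def by blast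
  have "2 \<le> length qs"
    using qs ab unfolding is_path_def by (cases qs) (auto simp: Suc_le_eq)
  then obtain ps where ps: "is_path V E ps" "2 \<le> length ps"
    and longest: "\<forall>rs. is_path V E rs \<longrightarrow> length rs \<le> length ps"
    using ex_longest_path[OF fin qs(1)] by fastforce
  then obtain l x rest where lx: "ps = l # x # rest"
    by (metis Suc_le_length_iff numeral_2_eq_2)
  then have "{w \<in> V. E l w} = {x}"
    using longest_path_hd_neighbours[OF sym irr acyc] ps longest by blast
  moreover have "l \<in> V" using ps lx unfolding is_path_def by simp
  ultimately show ?thesis by blast
qed

text \<open>Unlike \<^const>\<open>tree\<close>, this allows V to be empty and E to leave V, so that it survives
  the deletion of vertices.\<close>
definition subcubic_tree_on :: "'a set \<Rightarrow> ('a \<Rightarrow> 'a \<Rightarrow> bool) \<Rightarrow> bool" where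
  "subcubic_tree_on V E \<equiv> finite V \<and> connected_graph V E \<and> \<not> (\<exists>cs. is_cycle V E cs)
     \<and> subcubic V E"

lemma tree_imp_subcubic_tree_on: "tree V E \<Longrightarrow> subcubic V E \<Longrightarrow> subcubic_tree_on V E"
  unfolding tree_def graph_def subcubic_tree_on_def by blast

lemma subcubic_tree_on_Diff:
  assumes sym: "\<And>a b. E a b \<Longrightarrow> E b a"
    and T: "subcubic_tree_on V E" and deg: "degree V E l \<le> 1"
  shows "subcubic_tree_on (V - {l}) E"
  using T connected_graph_Diff_vertex[OF sym _ _ deg] acyclic_subset subcubic_subset
  unfolding subcubic_tree_on_def by (metis Diff_subset finite_Diff)

definition path_packing :: "'a set \<Rightarrow> ('a \<Rightarrow> 'a \<Rightarrow> bool) \<Rightarrow> 'a set \<Rightarrow> 'a list set \<Rightarrow> bool" where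
  "path_packing V E S P \<equiv> finite P
     \<and> (\<forall>ps\<in>P. is_path V E ps \<and> hd ps \<in> S \<and> last ps \<in> S \<and> hd ps \<noteq> last ps)
     \<and> (\<forall>ps\<in>P. \<forall>qs\<in>P. ps \<noteq> qs \<longrightarrow> set ps \<inter> set qs = {})"

lemma path_packing_mono: "path_packing V' E S P \<Longrightarrow> V' \<subseteq> V \<Longrightarrow> path_packing V E S P"
  unfolding path_packing_def using is_path_mono by blast

definition prolong :: "'a \<Rightarrow> 'a \<Rightarrow> 'a list \<Rightarrow> 'a list" where
  "prolong u l ps = (if hd ps = u then l # ps else if last ps = u then ps @ [l] else ps)"

lemma set_prolong: "set ps \<subseteq> set (prolong u l ps)" "set (prolong u l ps) \<subseteq> insert l (set ps)"
  unfolding prolong_def by auto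

lemma mem_prolong_imp: "l \<in> set (prolong u l ps) \<Longrightarrow> l \<notin> set ps \<Longrightarrow> ps \<noteq> [] \<Longrightarrow> u \<in> set ps"
  unfolding prolong_def by (auto split: if_splits)

lemma is_path_prolong:
  assumes ps: "is_path V E ps" "hd ps \<in> insert u S" "last ps \<in> insert u S" "hd ps \<noteq> last ps"
    and l: "l \<in> V" "l \<notin> set ps" "E l u" "E u l"
  shows "is_path V E (prolong u l ps)" "hd (prolong u l ps) \<in> insert l S"
    "last (prolong u l ps) \<in> insert l S" "hd (prolong u l ps) \<noteq> last (prolong u l ps)"
  using ps l ps(1)[unfolded is_path_def] is_path_Cons[of V E ps l] is_path_snoc[of V E ps l]
  unfolding prolong_def by auto

lemma path_packing_prolong:
  assumes P: "path_packing V' E (insert u S) P" and V': "V' \<subseteq> V"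
    and l: "l \<in> V" "l \<notin> V'" "E l u" "E u l"
  shows "path_packing V E (insert l S) (prolong u l ` P)" "card (prolong u l ` P) = card P"
proof -
  have path: "is_path V' E ps" "hd ps \<in> insert u S" "last ps \<in> insert u S" "hd ps \<noteq> last ps"
    if "ps \<in> P" for ps
    using P that unfolding path_packing_def by blast+
  have disj: "set ps \<inter> set qs = {}" if "ps \<in> P" "qs \<in> P" "ps \<noteq> qs" for ps qs
    using P that unfolding path_packing_def by blast
  have l_notin: "l \<notin> set ps" and ne: "ps \<noteq> []" if "ps \<in> P" for ps
    using path(1)[OF that] l(2) unfolding is_path_def by auto
  have "inj_on (prolong u l) P"
  proof
    fix ps qs assume ps: "ps \<in> P" and qs: "qs \<in> P" and "prolong u l ps = prolong u l qs"
    then have "set ps \<subseteq> insert l (set qs)"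
      using set_prolong(1)[of ps u l] set_prolong(2)[of u l qs] by simp
    then have "set ps \<subseteq> set qs" using l_notin[OF ps] by auto
    show "ps = qs"
    proof (rule ccontr)
      assume "ps \<noteq> qs"
      then have "set ps = {}" using disj[OF ps qs] Int_absorb2[OF \<open>set ps \<subseteq> set qs\<close>] by simp
      then show False using ne[OF ps] by simp
    qed
  qed
  then show "card (prolong u l ` P) = card P" by (rule card_image)
  have disj_prolong: "set (prolong u l ps) \<inter> set (prolong u l qs) = {}"
    if "ps \<in> P" "qs \<in> P" "ps \<noteq> qs" for ps qs
  proof -
    have "set ps \<inter> set qs = {}" using disj[OF that] .
    moreover from this have "l \<notin> set (prolong u l ps) \<inter> set (prolong u l qs)"
      using mem_prolong_imp[OF _ l_notin ne, OF _ that(1) that(1)]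
        mem_prolong_imp[OF _ l_notin ne, OF _ that(2) that(2)] by blast
    ultimately show ?thesis using set_prolong(2)[of u l ps] set_prolong(2)[of u l qs] by blast
  qed
  have path_prolong: "is_path V E (prolong u l ps) \<and> hd (prolong u l ps) \<in> insert l S
      \<and> last (prolong u l ps) \<in> insert l S \<and> hd (prolong u l ps) \<noteq> last (prolong u l ps)"
    if "ps \<in> P" for ps
    using is_path_prolong[OF is_path_mono[OF path(1)[OF that] V'] path(2-4)[OF that] l(1)
        l_notin[OF that] l(3,4)] by blast
  show "path_packing V E (insert l S) (prolong u l ` P)"
    using P path_prolong disj_prolong unfolding path_packing_def by auto
qed

lemma path_packing_insert_edge:
  assumes P: "path_packing V' E S P" and V': "V' \<subseteq> V"
    and lu: "l \<in> V" "u \<in> V" "l \<notin> V'" "u \<notin> V'" "E l u" "l \<noteq> u"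
  shows "path_packing V E (insert l (insert u S)) (insert [l, u] P)"
    and "card (insert [l, u] P) = Suc (card P)"
proof -
  have in_V': "set ps \<subseteq> V'" if "ps \<in> P" for ps
    using P that unfolding path_packing_def is_path_def by blast
  have "is_path V E [l, u]" using lu unfolding is_path_iff_successively by simp
  then show "path_packing V E (insert l (insert u S)) (insert [l, u] P)"
    using P is_path_mono[OF _ V'] in_V' lu unfolding path_packing_def by fastforce
  have "[l, u] \<notin> P" using in_V' lu by fastforce
  then show "card (insert [l, u] P) = Suc (card P)"
    using P unfolding path_packing_def by simp
qed

definition half_path_packing :: "'a set \<Rightarrow> ('a \<Rightarrow> 'a \<Rightarrow> bool) \<Rightarrow> 'a set \<Rightarrow> bool" where
  "half_path_packing V E S \<longleftrightarrow> (\<exists>P. path_packing V E S P \<and> card P = card S div 2)"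

lemma half_path_packing_mono:
  "half_path_packing V' E S \<Longrightarrow> V' \<subseteq> V \<Longrightarrow> half_path_packing V E S"
  unfolding half_path_packing_def using path_packing_mono by blast

lemma half_path_packing_move_terminal:
  assumes H: "half_path_packing V' E (insert u (S - {l}))" and V': "V' \<subseteq> V"
    and l: "l \<in> V" "l \<notin> V'" "E l u" "E u l" and S: "finite S" "l \<in> S" "u \<notin> S"
  shows "half_path_packing V E S"
proof -
  obtain P where P: "path_packing V' E (insert u (S - {l})) P"
    "card P = card (insert u (S - {l})) div 2"
    using H unfolding half_path_packing_def by blast
  have "card (insert u (S - {l})) = card S"
    using S card_Suc_Diff1[OF S(1,2)] by (simp del: card_Diff_insert)
  moreover have "insert l (S - {l}) = S" using S by auto
  ultimately show ?thesis
    using path_packing_prolong[OF P(1) V' l] P(2) unfolding half_path_packing_def by metis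
qed

lemma half_path_packing_insert_edge:
  assumes H: "half_path_packing V' E (S - {l, u})" and V': "V' \<subseteq> V"
    and lu: "l \<in> V" "u \<in> V" "l \<notin> V'" "u \<notin> V'" "E l u" "l \<noteq> u"
    and S: "finite S" "l \<in> S" "u \<in> S"
  shows "half_path_packing V E S"
proof -
  obtain P where P: "path_packing V' E (S - {l, u}) P" "card P = card (S - {l, u}) div 2"
    using H unfolding half_path_packing_def by blast
  have "2 \<le> card S" using S lu(6) card_mono[of S "{l, u}"] by simp
  then have "Suc ((card S - 2) div 2) = card S div 2" using le_div_geq[of 2 "card S"] by simp
  moreover have "card (S - {l, u}) = card S - 2" using S lu(6) by (simp add: card_Diff_subset)
  moreover have "insert l (insert u (S - {l, u})) = S" using S by auto
  ultimately show ?thesis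
    using path_packing_insert_edge[OF P(1) V' lu] P(2) unfolding half_path_packing_def by metis
qed

lemma subcubic_tree_on_obtain_leaf:
  assumes sym: "\<And>a b. E a b \<Longrightarrow> E b a" and irr: "\<And>a. \<not> E a a"
    and T: "subcubic_tree_on V E" and two: "2 \<le> card V"
  obtains l u where "l \<in> V" "u \<in> V - {l}" "E l u" "E u l"
    "subcubic_tree_on (V - {l}) E" "degree (V - {l}) E u = degree V E u - 1"
proof -
  have fin: "finite V" using T unfolding subcubic_tree_on_def by blast
  obtain l u where l: "l \<in> V" and N: "{w \<in> V. E l w} = {u}"
    using ex_leaf[where E = E, OF sym irr fin _ _ two] T unfolding subcubic_tree_on_def by blast
  then have u: "u \<in> V - {l}" "E l u" "E u l" using sym irr by auto
  moreover have "subcubic_tree_on (V - {l}) E"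
    using subcubic_tree_on_Diff[where E = E, OF sym T] N by (simp add: degree_def)
  moreover have "degree (V - {l}) E u = degree V E u - 1"
    using degree_Diff_neighbour[where E = E, OF fin l u(3)] .
  ultimately show ?thesis using that l by blast
qed

lemma half_path_packing_exists:
  assumes sym: "\<And>a b. E a b \<Longrightarrow> E b a" and irr: "\<And>a. \<not> E a a"
    and "subcubic_tree_on V E" "S \<subseteq> V" "\<forall>v\<in>S. degree V E v \<le> 2"
  shows "half_path_packing V E S"
  using assms(3-)
proof (induction "card V" arbitrary: V S rule: less_induct)
  case less
  note T = less.prems(1) and SV = less.prems(2) and deg_S = less.prems(3)
  have fin: "finite V" using T unfolding subcubic_tree_on_def by blast
  show ?case
  proof (cases "card S \<le> 1")
    case True
    then show ?thesis unfolding half_path_packing_def path_packing_def by force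
  next
    case False
    then have "2 \<le> card V" using card_mono[OF fin SV] by linarith
    then obtain l u where l: "l \<in> V" and u: "u \<in> V - {l}" "E l u" "E u l"
      and T': "subcubic_tree_on (V - {l}) E" and deg_u: "degree (V - {l}) E u = degree V E u - 1"
      using subcubic_tree_on_obtain_leaf[where E = E, OF sym irr T] by blast
    have IH: "half_path_packing W E S'"
      if "W \<subseteq> V - {l}" "subcubic_tree_on W E" "S' \<subseteq> W" "\<forall>v\<in>S'. degree W E v \<le> 2" for W S'
    proof -
      have "W \<subset> V" using that(1) l by blast
      then show ?thesis using less.hyps[OF psubset_card_mono[OF fin] that(2-4)] by blast
    qed
    have deg_le: "degree W E v \<le> degree V E v" if "W \<subseteq> V" for W v
      using degree_mono[OF fin that] .
    have fin_S: "finite S" using fin SV finite_subset by blast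
    consider "l \<notin> S" | "l \<in> S" "u \<notin> S" | "l \<in> S" "u \<in> S" by blast
    then show ?thesis
    proof cases
      case 1
      then have "S \<subseteq> V - {l}" using SV by blast
      moreover have "\<forall>v\<in>S. degree (V - {l}) E v \<le> 2"
        using deg_S by (auto intro: order.trans[OF deg_le])
      ultimately have "half_path_packing (V - {l}) E S" using IH[OF order_refl T'] by blast
      then show ?thesis by (rule half_path_packing_mono) blast
    next
      case 2
      have "degree V E u \<le> 3" using T u(1) unfolding subcubic_tree_on_def subcubic_def by blast
      then have "\<forall>v\<in>insert u (S - {l}). degree (V - {l}) E v \<le> 2"
        using deg_u deg_S by (auto intro: order.trans[OF deg_le])
      moreover have "insert u (S - {l}) \<subseteq> V - {l}" using SV u by auto
      ultimately have "half_path_packing (V - {l}) E (insert u (S - {l}))"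
        using IH[OF order_refl T'] by blast
      then show ?thesis
        by (rule half_path_packing_move_terminal[where E = E, OF _ _ l _ u(2,3) fin_S 2]) auto
    next
      case 3
      have "degree (V - {l}) E u \<le> 1" using deg_u deg_S 3 by fastforce
      then have "subcubic_tree_on (V - {l} - {u}) E"
        using subcubic_tree_on_Diff[where E = E, OF sym T'] by simp
      moreover have "\<forall>v\<in>S - {l, u}. degree (V - {l} - {u}) E v \<le> 2"
        using deg_S by (auto intro: order.trans[OF deg_le])
      moreover have "S - {l, u} \<subseteq> V - {l} - {u}" using SV by blast
      ultimately have "half_path_packing (V - {l} - {u}) E (S - {l, u})" by (intro IH) auto
      then show ?thesis
        using u by (intro half_path_packing_insert_edge[where E = E, OF _ _ l _ _ _ u(2) _ fin_S 3])
          auto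
    qed
  qed
qed

theorem lemma5:
  fixes V :: "'a set" and E :: "'a \<Rightarrow> 'a \<Rightarrow> bool" and p :: nat
  assumes "tree V E" and "subcubic V E" and "card (leaves V E) = p"
  shows "\<exists>P :: 'a list set. finite P \<and> card P = p div 2
           \<and> (\<forall>ps\<in>P. leaf_to_leaf_path V E ps)
           \<and> (\<forall>ps\<in>P. \<forall>qs\<in>P. ps \<noteq> qs \<longrightarrow> set ps \<inter> set qs = {})"
proof -
  have sym: "\<And>a b. E a b \<Longrightarrow> E b a" and irr: "\<And>a. \<not> E a a"
    using assms(1) unfolding tree_def graph_def by auto
  have "leaves V E \<subseteq> V" "\<forall>v\<in>leaves V E. degree V E v \<le> 2" unfolding leaves_def by auto
  then have "half_path_packing V E (leaves V E)"
    using half_path_packing_exists[OF sym irr tree_imp_subcubic_tree_on[OF assms(1,2)]] by blast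
  then show ?thesis
    using assms(3) unfolding half_path_packing_def path_packing_def leaf_to_leaf_path_def by blast
qed

end
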